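(* Let $p,q$ be positive integers and $\mathbf{C}=\begin{bmatrix}1 & p\\ q & 1+pq\end{bmatrix}$. For each positive integer $e$ let $T_e$ be the least period of the Cat map over $\mathbb{Z}_{2^e}$. Then there exists a positive integer $e_s$ such that $T_{e+l}=2^l\cdot T_e$ for every integer $e\ge e_s$ and every non-negative integer $l$.
   Context: For a positive integer $N$, the Cat map over $\mathbb{Z}_N$ is the map $\mathbb{Z}_N^2\to\mathbb{Z}_N^2$, $v\mapsto \mathbf{C}v \bmod N$. Its least period is the least positive integer $n$ such that $\mathbf{C}^n v\equiv v \pmod N$ for all $v\in\mathbb{Z}_N^2$. *)

theory Defs
  imports Main
begin

text \<open>The Cat map over Z_N: v \<mapsto> C v mod N with C = [[1, p], [q, 1 + p q]].
  Elements of Z_N^2 are represented by pairs of naturals in {0..<N}.\<close>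
definition cat_map :: "nat \<Rightarrow> nat \<Rightarrow> nat \<Rightarrow> nat \<times> nat \<Rightarrow> nat \<times> nat" where
  "cat_map p q N v = ((fst v + p * snd v) mod N, (q * fst v + (1 + p * q) * snd v) mod N)"

definition cat_period :: "nat \<Rightarrow> nat \<Rightarrow> nat \<Rightarrow> nat" where
  "cat_period p q N = (LEAST n. 0 < n \<and>
      (\<forall>v \<in> {0..<N} \<times> {0..<N}. (cat_map p q N ^^ n) v = v))"

end

theory Submission
  imports Defs "HOL-Number_Theory.Cong" "HOL-Computational_Algebra.Primes"
begin

text \<open>Say that a matrix has exact level k if it is congruent to I modulo 2^k but not modulo
  2^(k+1). For k \<ge> 2 squaring raises the exact level by one, since
  (I + 2^k M)^2 = I + 2^(k+1) (M + 2^(k-1) M^2) and M + 2^(k-1) M^2 \<equiv> M (mod 2).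
  Let n be the period modulo 4 (C^12 \<equiv> I mod 4, so it exists) and k \<ge> 2 the exact level of C^n,
  which is finite because the upper right entry of C^n is at least n, so C^n \<noteq> I. Then C^(2^j n)
  has exact level k + j, and the period modulo 2^(k+j) is a multiple of n dividing 2^j n; any
  proper divisor 2^i n would make C^(2^i n) \<equiv> I modulo 2^(k+i+1), contradicting its exact level.\<close>

datatype 'a mat2 = Mat2 (m11: 'a) (m12: 'a) (m21: 'a) (m22: 'a)

instantiation mat2 :: (zero) zero
begin
definition zero_mat2 :: "'a mat2" where "0 = Mat2 0 0 0 0"
instance ..
end

instantiation mat2 :: (plus) plus
begin
fun plus_mat2 :: "'a mat2 \<Rightarrow> 'a mat2 \<Rightarrow> 'a mat2" where
  "Mat2 a b c d + Mat2 a' b' c' d' = Mat2 (a + a') (b + b') (c + c') (d + d')"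
instance ..
end

instantiation mat2 :: (comm_semiring_1) monoid_mult
begin
definition one_mat2 :: "'a mat2" where "1 = Mat2 1 0 0 1"
fun times_mat2 :: "'a mat2 \<Rightarrow> 'a mat2 \<Rightarrow> 'a mat2" where
  "Mat2 a b c d * Mat2 a' b' c' d' =
     Mat2 (a * a' + b * c') (a * b' + b * d') (c * a' + d * c') (c * b' + d * d')"
instance proof
  fix A B C :: "'a mat2"
  show "A * B * C = A * (B * C)"
    by (cases A; cases B; cases C) (simp add: algebra_simps)
  show "1 * A = A" "A * 1 = A"
    by (cases A; simp add: one_mat2_def)+
qed
end

lemma one_plus_smult_squared:
  fixes M :: "nat mat2"
  shows "(1 + map_mat2 ((*) (2 * t)) M)\<^sup>2 = 1 + map_mat2 ((*) (4 * t)) (M + map_mat2 ((*) t) (M * M))"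
  by (cases M) (simp add: power2_eq_square one_mat2_def algebra_simps)

definition mat2_mod :: "'a::euclidean_semiring_cancel \<Rightarrow> 'a mat2 \<Rightarrow> 'a mat2" where
  "mat2_mod N = map_mat2 (\<lambda>x. x mod N)"

lemma mat2_mod_mult: "mat2_mod N (A * B) = mat2_mod N (mat2_mod N A * mat2_mod N B)"
proof -
  have "(a mod N * (b mod N) + c mod N * (d mod N)) mod N = (a * b + c * d) mod N" for a b c d
    by (metis mod_add_eq mod_mult_eq)
  then show ?thesis by (cases A; cases B) (simp add: mat2_mod_def)
qed

lemma mat2_mod_mod_dvd: "M dvd N \<Longrightarrow> mat2_mod M (mat2_mod N A) = mat2_mod M A"
  by (cases A) (simp add: mat2_mod_def mod_mod_cancel)

lemma mat2_mod_eq_one_dvd: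
  "mat2_mod N A = mat2_mod N 1 \<Longrightarrow> M dvd N \<Longrightarrow> mat2_mod M A = mat2_mod M 1"
  by (metis mat2_mod_mod_dvd)

lemma mat2_mod_by_1: "mat2_mod 1 A = 0"
  by (cases A) (simp add: mat2_mod_def zero_mat2_def)

lemma mat2_mod_one: "1 < (N::nat) \<Longrightarrow> mat2_mod N 1 = 1"
  by (simp add: mat2_mod_def one_mat2_def)

lemma mat2_mod_eq_self:
  fixes A :: "nat mat2"
  assumes "m11 A + m12 A + m21 A + m22 A < N"
  shows "mat2_mod N A = A"
  using assms by (cases A) (simp add: mat2_mod_def)

lemma mat2_mod_power: "mat2_mod N (A ^ n) = mat2_mod N (mat2_mod N A ^ n)"
proof (induction n)
  case 0
  show ?case by simp
next
  case (Suc n)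
  have "mat2_mod N (A ^ Suc n) = mat2_mod N (mat2_mod N A * mat2_mod N (mat2_mod N A ^ n))"
    by (simp add: mat2_mod_mult[of N A] Suc)
  also have "\<dots> = mat2_mod N (mat2_mod N A ^ Suc n)"
    using mat2_mod_mult[of N "mat2_mod N A" "mat2_mod N A ^ n"] mat2_mod_mod_dvd[of N N A] by simp
  finally show ?case .
qed

definition mat2_order :: "'a::euclidean_semiring_cancel \<Rightarrow> 'a mat2 \<Rightarrow> nat" where
  "mat2_order N A = (LEAST n. 0 < n \<and> mat2_mod N (A ^ n) = mat2_mod N 1)"

lemma mat2_mod_power_mod:
  assumes "mat2_mod N (A ^ n) = mat2_mod N 1"
  shows "mat2_mod N (A ^ (m mod n)) = mat2_mod N (A ^ m)"
proof -
  have one: "mat2_mod N ((A ^ n) ^ k) = mat2_mod N 1" for k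
    using mat2_mod_power[of N "A ^ n" k] mat2_mod_power[of N 1 k] by (simp add: assms)
  have "mat2_mod N (A ^ m) = mat2_mod N (A ^ (m mod n) * (A ^ n) ^ (m div n))"
    by (simp flip: power_mult power_add)
  also have "\<dots> = mat2_mod N (mat2_mod N (A ^ (m mod n)) * mat2_mod N 1)"
    by (simp only: mat2_mod_mult[of N "A ^ (m mod n)"] one)
  also have "\<dots> = mat2_mod N (A ^ (m mod n))"
    using mat2_mod_mult[of N "A ^ (m mod n)" 1] by simp
  finally show ?thesis by simp
qed

lemma
  assumes "0 < n" "mat2_mod N (A ^ n) = mat2_mod N 1"
  shows mat2_order_pos: "0 < mat2_order N A"
    and mat2_mod_power_eq_one_iff: "mat2_mod N (A ^ m) = mat2_mod N 1 \<longleftrightarrow> mat2_order N A dvd m"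
proof -
  let ?T = "mat2_order N A"
  have T: "0 < ?T \<and> mat2_mod N (A ^ ?T) = mat2_mod N 1"
    unfolding mat2_order_def using assms by (rule LeastI[of _ n, OF conjI])
  then show "0 < ?T" by simp
  have "mat2_mod N (A ^ m) = mat2_mod N 1 \<longleftrightarrow> mat2_mod N (A ^ (m mod ?T)) = mat2_mod N 1"
    using mat2_mod_power_mod[of N A ?T m] T by simp
  also have "\<dots> \<longleftrightarrow> m mod ?T = 0"
  proof
    assume "mat2_mod N (A ^ (m mod ?T)) = mat2_mod N 1"
    moreover have "m mod ?T < ?T" using T by simp
    ultimately show "m mod ?T = 0"
      using not_less_Least[of "m mod ?T" "\<lambda>n. 0 < n \<and> mat2_mod N (A ^ n) = mat2_mod N 1"]
      unfolding mat2_order_def by auto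
  qed simp
  finally show "mat2_mod N (A ^ m) = mat2_mod N 1 \<longleftrightarrow> ?T dvd m"
    by (simp add: dvd_eq_mod_eq_0)
qed

lemma mat2_mod_add_smult:
  "N dvd c \<Longrightarrow> mat2_mod N (A + map_mat2 ((*) c) B) = mat2_mod N A"
  by (cases A; cases B) (auto simp: mat2_mod_def mult.assoc elim!: dvdE)

lemma mat2_mod_one_plus_smult_eq_one_iff:
  fixes X :: "nat mat2"
  assumes "0 < m"
  shows "mat2_mod (m * k) (1 + map_mat2 ((*) m) X) = mat2_mod (m * k) 1 \<longleftrightarrow> mat2_mod k X = 0"
proof -
  have diag: "[1 + m * x = 1] (mod m * k) \<longleftrightarrow> k dvd x" for x
    using assms by (subst cong_add_lcancel_0_nat) (simp add: cong_0_iff)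
  have off: "m * x mod (m * k) = 0 \<longleftrightarrow> k dvd x" for x
    using assms by (simp add: mod_eq_0_iff_dvd)
  show ?thesis
    using assms
    by (cases X)
      (simp add: mat2_mod_def one_mat2_def zero_mat2_def diag[unfolded cong_def, simplified] off
        mod_eq_0_iff_dvd)
qed

lemma mat2_mod_eq_one_imp_one_plus_smult:
  fixes A :: "nat mat2"
  assumes "2 \<le> m" "mat2_mod m A = mat2_mod m 1"
  shows "A = 1 + map_mat2 ((*) m) (map_mat2 (\<lambda>x. x div m) A)"
proof (cases A)
  case (Mat2 a b c d)
  then have "a mod m = 1" "b mod m = 0" "c mod m = 0" "d mod m = 1"
    using assms by (simp_all add: mat2_mod_def one_mat2_def)
  then show ?thesis
    using mod_mult_div_eq[of a m] mod_mult_div_eq[of b m] mod_mult_div_eq[of c m] mod_mult_div_eq[of d m]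
    by (simp add: Mat2 one_mat2_def)
qed

definition exact_level :: "nat \<Rightarrow> nat mat2 \<Rightarrow> bool" where
  "exact_level k A \<longleftrightarrow>
     mat2_mod (2 ^ k) A = mat2_mod (2 ^ k) 1 \<and> mat2_mod (2 ^ (k + 1)) A \<noteq> mat2_mod (2 ^ (k + 1)) 1"

lemma exact_level_one_plus_smult:
  "exact_level k (1 + map_mat2 ((*) (2 ^ k)) X) \<longleftrightarrow> mat2_mod 2 X \<noteq> 0"
  using mat2_mod_one_plus_smult_eq_one_iff[of "2 ^ k" 1 X]
    mat2_mod_one_plus_smult_eq_one_iff[of "2 ^ k" 2 X] mat2_mod_by_1[of X]
  by (simp add: exact_level_def mult.commute)

lemma exact_level_square:
  assumes "2 \<le> k" "exact_level k A"
  shows "exact_level (k + 1) (A\<^sup>2)"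
proof -
  obtain i where i: "k = i + 2" using assms(1) le_Suc_ex by (metis add.commute)
  define X where "X = map_mat2 (\<lambda>x. x div 2 ^ k) A"
  have "(2::nat) \<le> 2 ^ k" by (simp add: i)
  then have A: "A = 1 + map_mat2 ((*) (2 ^ k)) X"
    using assms(2) mat2_mod_eq_one_imp_one_plus_smult unfolding exact_level_def X_def by blast
  then have X: "mat2_mod 2 X \<noteq> 0"
    using assms(2) exact_level_one_plus_smult by simp
  have k: "(2::nat) ^ k = 2 * (2 * 2 ^ i)" "(4::nat) * (2 * 2 ^ i) = 2 ^ (k + 1)"
    by (simp_all add: i)
  have "A\<^sup>2 = 1 + map_mat2 ((*) (2 ^ (k + 1))) (X + map_mat2 ((*) (2 * 2 ^ i)) (X * X))"
    unfolding A k(1) one_plus_smult_squared k(2) ..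
  moreover have "mat2_mod 2 (X + map_mat2 ((*) (2 * 2 ^ i)) (X * X)) = mat2_mod 2 X"
    by (rule mat2_mod_add_smult) simp
  ultimately show ?thesis
    using X exact_level_one_plus_smult[of "k + 1"] by simp
qed

lemma exact_level_power_two:
  assumes "2 \<le> k" "exact_level k A"
  shows "exact_level (k + j) (A ^ 2 ^ j)"
proof (induction j)
  case 0
  show ?case using assms(2) by simp
next
  case (Suc j)
  have "exact_level (k + j + 1) ((A ^ 2 ^ j)\<^sup>2)"
    using exact_level_square[OF _ Suc] assms(1) by simp
  then show ?case by (simp add: mult.commute flip: power_mult)
qed

lemma exact_level_exists:
  assumes "A \<noteq> 1" "mat2_mod (2 ^ e) A = mat2_mod (2 ^ e) 1"
  shows "\<exists>k \<ge> e. exact_level k A"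
proof -
  define P where "P i \<longleftrightarrow> mat2_mod (2 ^ (e + i)) A \<noteq> mat2_mod (2 ^ (e + i)) 1" for i
  define s where "s = m11 A + m12 A + m21 A + m22 A + 2"
  have "s < 2 ^ s" by simp
  also have "\<dots> \<le> 2 ^ (e + s)" by simp
  finally have "P s"
    using assms(1) mat2_mod_eq_self[of A "2 ^ (e + s)"] mat2_mod_eq_self[of 1 "2 ^ (e + s)"]
    by (simp add: P_def s_def one_mat2_def)
  moreover have "\<not> P 0" using assms(2) by (simp add: P_def)
  ultimately obtain i where "\<forall>i' \<le> i. \<not> P i'" "P (Suc i)"
    using ex_least_nat_less by blast
  then have "exact_level (e + i) A" by (simp add: P_def exact_level_def)
  then show ?thesis by (intro exI[of _ "e + i"]) simp
qed

lemma mat2_order_two_power: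
  assumes "2 \<le> k" "M dvd 2 ^ k" "exact_level k (A ^ mat2_order M A)"
  shows "mat2_order (2 ^ (k + j)) A = 2 ^ j * mat2_order M A"
proof -
  let ?n = "mat2_order M A" and ?T = "mat2_order (2 ^ (k + j)) A"
  have level: "exact_level (k + i) (A ^ (2 ^ i * ?n))" for i
    using exact_level_power_two[OF assms(1,3)] by (simp add: mult.commute power_mult)
  have "?n \<noteq> 0"
  proof
    assume "?n = 0"
    with assms(3) show False by (simp add: exact_level_def)
  qed
  moreover have "mat2_mod M (A ^ ?n) = mat2_mod M 1"
    using assms(3) unfolding exact_level_def by (blast intro: mat2_mod_eq_one_dvd[OF _ assms(2)])
  ultimately have order_M: "mat2_mod M (A ^ m) = mat2_mod M 1 \<longleftrightarrow> ?n dvd m" for m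
    by (intro mat2_mod_power_eq_one_iff) simp_all
  have "mat2_mod (2 ^ (k + j)) (A ^ (2 ^ j * ?n)) = mat2_mod (2 ^ (k + j)) 1"
    using level[of j] by (simp add: exact_level_def)
  moreover have "0 < 2 ^ j * ?n" using \<open>?n \<noteq> 0\<close> by simp
  ultimately have order: "mat2_mod (2 ^ (k + j)) (A ^ m) = mat2_mod (2 ^ (k + j)) 1 \<longleftrightarrow> ?T dvd m" for m
    by (rule mat2_mod_power_eq_one_iff[rotated])
  have "M dvd 2 ^ (k + j)"
    using assms(2) by (simp add: power_add)
  then have "?n dvd ?T"
    using order[of ?T] order_M[of ?T] mat2_mod_eq_one_dvd[of "2 ^ (k + j)" "A ^ ?T" M] by simp
  then obtain t where t: "?T = ?n * t" ..
  have "t dvd 2 ^ j"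
    using order[of "2 ^ j * ?n"] level[of j] \<open>?n \<noteq> 0\<close> by (simp add: t exact_level_def mult.commute)
  then obtain i where i: "i \<le> j" "t = 2 ^ i"
    by (auto simp: divides_primepow_nat)
  have "i = j"
  proof (rule ccontr)
    assume "i \<noteq> j"
    then have "2 ^ (k + i + 1) dvd (2 ^ (k + j) :: nat)"
      using i(1) by (intro le_imp_power_dvd) simp
    moreover have "mat2_mod (2 ^ (k + j)) (A ^ (2 ^ i * ?n)) = mat2_mod (2 ^ (k + j)) 1"
      using order t i by simp
    ultimately show False
      using level[of i] mat2_mod_eq_one_dvd[of "2 ^ (k + j)" "A ^ (2 ^ i * ?n)"]
      unfolding exact_level_def by simp
  qed
  then show ?thesis using t i by simp
qed

lemma mat2_mod_four_square:
  fixes A :: "nat mat2"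
  assumes "mat2_mod 2 A = mat2_mod 2 1"
  shows "mat2_mod 4 (A\<^sup>2) = mat2_mod 4 1"
proof -
  define X where "X = map_mat2 (\<lambda>x. x div 2) A"
  have "A = 1 + map_mat2 ((*) (2 * 1)) X"
    using mat2_mod_eq_one_imp_one_plus_smult[OF _ assms] by (simp add: X_def)
  then have "A\<^sup>2 = 1 + map_mat2 ((*) 4) (X + map_mat2 ((*) 1) (X * X))"
    by (simp only: one_plus_smult_squared) simp
  then show ?thesis
    using mat2_mod_one_plus_smult_eq_one_iff[of 4 1] mat2_mod_by_1[of "X + map_mat2 ((*) 1) (X * X)"]
    by simp
qed

fun mat2_apply :: "'a::comm_semiring_1 mat2 \<Rightarrow> 'a \<times> 'a \<Rightarrow> 'a \<times> 'a" where
  "mat2_apply (Mat2 a b c d) (x, y) = (a * x + b * y, c * x + d * y)"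

lemma mat2_apply_mult: "mat2_apply (A * B) v = mat2_apply A (mat2_apply B v)"
  by (cases A; cases B; cases v) (simp add: algebra_simps)

lemma mat2_apply_one: "mat2_apply 1 v = v"
  by (cases v) (simp add: one_mat2_def)

definition pair_mod :: "'a::euclidean_semiring_cancel \<Rightarrow> 'a \<times> 'a \<Rightarrow> 'a \<times> 'a" where
  "pair_mod N = map_prod (\<lambda>x. x mod N) (\<lambda>x. x mod N)"

lemma pair_mod_mat2_apply_pair_mod:
  "pair_mod N (mat2_apply A (pair_mod N v)) = pair_mod N (mat2_apply A v)"
proof -
  have "(a * (x mod N) + b * (y mod N)) mod N = (a * x + b * y) mod N" for a b x y
    by (metis mod_add_eq mod_mult_right_eq)
  then show ?thesis by (cases A; cases v) (simp add: pair_mod_def)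
qed

lemma pair_mod_mat2_apply_mat2_mod:
  "pair_mod N (mat2_apply (mat2_mod N A) v) = pair_mod N (mat2_apply A v)"
proof -
  have "(a mod N * x + b mod N * y) mod N = (a * x + b * y) mod N" for a b x y
    by (metis mod_add_eq mod_mult_left_eq)
  then show ?thesis by (cases A; cases v) (simp add: pair_mod_def mat2_mod_def)
qed

lemma pair_mod_mat2_apply_eq_id_iff:
  fixes A :: "nat mat2"
  assumes "2 \<le> N"
  shows "(\<forall>v \<in> {0..<N} \<times> {0..<N}. pair_mod N (mat2_apply A v) = v) \<longleftrightarrow> mat2_mod N A = 1"
proof
  assume fix_all: "\<forall>v \<in> {0..<N} \<times> {0..<N}. pair_mod N (mat2_apply A v) = v"
  have "pair_mod N (mat2_apply A (1, 0)) = (1, 0)" "pair_mod N (mat2_apply A (0, 1)) = (0, 1)"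
    using fix_all assms by auto
  then show "mat2_mod N A = 1"
    by (cases A) (simp add: pair_mod_def mat2_mod_def one_mat2_def)
next
  assume "mat2_mod N A = 1"
  then have "pair_mod N (mat2_apply A v) = pair_mod N v" for v
    by (metis pair_mod_mat2_apply_mat2_mod mat2_apply_one)
  then show "\<forall>v \<in> {0..<N} \<times> {0..<N}. pair_mod N (mat2_apply A v) = v"
    by (auto simp: pair_mod_def)
qed

definition cat_mat :: "nat \<Rightarrow> nat \<Rightarrow> nat mat2" where
  "cat_mat p q = Mat2 1 p q (1 + p * q)"

lemma cat_map_funpow:
  assumes "v \<in> {0..<N} \<times> {0..<N}"
  shows "(cat_map p q N ^^ n) v = pair_mod N (mat2_apply (cat_mat p q ^ n) v)"
proof (induction n)
  case 0
  show ?case using assms by (auto simp: pair_mod_def mat2_apply_one)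
next
  case (Suc n)
  have "cat_map p q N w = pair_mod N (mat2_apply (cat_mat p q) w)" for w
    by (cases w) (simp add: cat_map_def cat_mat_def pair_mod_def)
  then show ?case
    using Suc pair_mod_mat2_apply_pair_mod by (simp add: mat2_apply_mult)
qed

lemma cat_period_eq_mat2_order:
  assumes "2 \<le> N"
  shows "cat_period p q N = mat2_order N (cat_mat p q)"
  using pair_mod_mat2_apply_eq_id_iff[OF assms] cat_map_funpow mat2_mod_one[of N] assms
  unfolding cat_period_def mat2_order_def by simp

lemma cat_mat_power_entries:
  assumes "0 < p"
  shows "n \<le> m12 (cat_mat p q ^ n) \<and> 0 < m22 (cat_mat p q ^ n)"
proof (induction n)
  case 0
  show ?case by (simp add: one_mat2_def)
next
  case (Suc n)
  obtain a b c d where C: "cat_mat p q ^ n = Mat2 a b c d"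
    by (cases "cat_mat p q ^ n")
  have "n \<le> b" "0 < d" using Suc by (simp_all add: C)
  moreover have "1 \<le> p * d" using assms \<open>0 < d\<close> by (simp add: Suc_le_eq)
  ultimately have "Suc n \<le> b + p * d" by linarith
  moreover have "cat_mat p q ^ Suc n = cat_mat p q * Mat2 a b c d"
    by (simp only: power_Suc C)
  ultimately show ?case using \<open>0 < d\<close> by (simp add: cat_mat_def)
qed

lemma cat_mat_power_ne_one: "0 < p \<Longrightarrow> 0 < n \<Longrightarrow> cat_mat p q ^ n \<noteq> 1"
  using cat_mat_power_entries[of p n q] by (auto simp: one_mat2_def)

lemma cat_mat_power_12: "mat2_mod 4 (cat_mat p q ^ 12) = mat2_mod 4 1"
proof -
  have reduce: "mat2_mod 2 (cat_mat p q) = mat2_mod 2 (cat_mat (p mod 2) (q mod 2))"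
    by (simp add: cat_mat_def mat2_mod_def) (metis mod_Suc_eq mod_mult_eq)
  \<comment> \<open>C mod 2 lies in GL(2, F_2), a group of order 6.\<close>
  have power6: "A ^ 6 = A * A * A * A * A * A" for A :: "nat mat2"
    by (simp add: numeral_eq_Suc mult.assoc)
  have "mat2_mod 2 (cat_mat p' q' ^ 6) = mat2_mod 2 1" if "p' \<in> {0, 1}" "q' \<in> {0, 1}" for p' q'
    using that by (auto simp: power6 cat_mat_def mat2_mod_def one_mat2_def)
  then have "mat2_mod 2 (cat_mat p q ^ 6) = mat2_mod 2 1"
    by (metis reduce mat2_mod_power mod2_eq_if insert_iff)
  then have "mat2_mod 4 ((cat_mat p q ^ 6)\<^sup>2) = mat2_mod 4 1"
    by (rule mat2_mod_four_square)
  then show ?thesis by (simp flip: power_mult)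
qed

theorem theorem2:
  fixes p q :: nat
  assumes "0 < p" and "0 < q"
  shows "\<exists>e_s::nat. 0 < e_s \<and> (\<forall>e l. e \<ge> e_s \<longrightarrow>
           cat_period p q (2 ^ (e + l)) = 2 ^ l * cat_period p q (2 ^ e))"
proof -
  let ?C = "cat_mat p q"
  let ?n = "mat2_order 4 ?C"
  have "0 < ?n" "mat2_mod 4 (?C ^ ?n) = mat2_mod 4 1"
    using mat2_order_pos[OF _ cat_mat_power_12] mat2_mod_power_eq_one_iff[OF _ cat_mat_power_12]
    by simp_all
  moreover have "?C ^ ?n \<noteq> 1"
    using cat_mat_power_ne_one assms(1) \<open>0 < ?n\<close> by blast
  ultimately obtain k where k: "2 \<le> k" "exact_level k (?C ^ ?n)"
    using exact_level_exists[of "?C ^ ?n" 2] by auto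
  have period: "cat_period p q (2 ^ (k + j)) = 2 ^ j * ?n" for j
  proof -
    have "(2::nat) ^ 1 \<le> 2 ^ (k + j)"
      using k(1) by (intro power_increasing) simp_all
    moreover have "4 dvd (2::nat) ^ k"
      using k(1) le_imp_power_dvd[of 2 k 2] by simp
    ultimately show ?thesis
      using cat_period_eq_mat2_order mat2_order_two_power[OF k(1) _ k(2)] by simp
  qed
  show ?thesis
  proof (intro exI[of _ k] conjI allI impI)
    fix e l :: nat
    assume "k \<le> e"
    then obtain j where "e = k + j" using le_Suc_ex by blast
    then show "cat_period p q (2 ^ (e + l)) = 2 ^ l * cat_period p q (2 ^ e)"
      using period[of j] period[of "j + l"] by (simp add: add.assoc power_add)
  qed (use k in simp)
qed

end
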